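(* Let $\bar{\mathcal S}$ and $\mathcal S$ be countable sets and $n\ge 2$. Let $\mu$ be a Markov probability measure on $\bar{\mathcal S}^n$ with initial distribution $p_0$ and transition kernels $p_k(\cdot\mid\cdot)$, $1\le k\le n-1$, i.e. $\mu(\bar x)=p_0(\bar x_1)\prod_{k=1}^{n-1}p_k(\bar x_{k+1}\mid \bar x_k)$. For each $1\le \ell\le n$ and $\bar x\in\bar{\mathcal S}$ let $q_\ell(\cdot\mid\bar x)$ be a probability measure on $\mathcal S$. Let $\rho$ be the probability measure on $\mathcal S^n$ given by $$\rho(x)=\sum_{\bar x\in\bar{\mathcal S}^n}\mu(\bar x)\prod_{\ell=1}^n q_\ell(x_\ell\mid \bar x_\ell),$$ and let $X=(X_1,\dots,X_n)$ be a random vector with law $\rho$ (a hidden Markov process). For $1\le k\le n-1$ define the contraction coefficient $$\theta_k=\sup_{\bar x,\bar x'\in\bar{\mathcal S}}\big\|p_k(\cdot\mid\bar x)-p_k(\cdot\mid\bar x')\big\|_{TV}.$$ Then for all $1\le i<j\le n$, $$\bar\eta_{ij}\le \theta_i\theta_{i+1}\cdots\theta_{j-1},$$ where $\bar\eta_{ij}$ is computed for the process $X$.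
   Context: For a signed measure $\tau$ on a countable set $\mathcal X$, $\|\tau\|_{TV}=\frac12\sum_{x\in\mathcal X}|\tau(x)|$. For a random process $X=(X_1,\dots,X_n)$ on $\mathcal S^n$, $1\le i<j\le n$, $y\in\mathcal S^{i-1}$ and $w,w'\in\mathcal S$, let $\mathcal L(X_j^n\mid X_1^{i-1}=y,X_i=w)$ denote the conditional law of $(X_j,\dots,X_n)$ given $(X_1,\dots,X_{i-1})=y$ and $X_i=w$ (considered only when this conditioning event has positive probability), and define $$\eta_{ij}(y,w,w')=\big\|\mathcal L(X_j^n\mid X_1^{i-1}=y,X_i=w)-\mathcal L(X_j^n\mid X_1^{i-1}=y,X_i=w')\big\|_{TV},\qquad \bar\eta_{ij}=\sup_{y\in\mathcal S^{i-1}}\sup_{w,w'\in\mathcal S}\eta_{ij}(y,w,w'),$$ the suprema ranging over $y,w,w'$ for which both conditioning events have positive probability. *)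

theory Defs
  imports "HOL-Probability.Probability"
begin

text \<open>Sequences in S^n are lists of length n; the paper's coordinate k
  (1-based) is list index k-1.\<close>

definition tv :: "('a \<Rightarrow> real) \<Rightarrow> ('a \<Rightarrow> real) \<Rightarrow> real" where
  "tv f g = infsum (\<lambda>x. \<bar>f x - g x\<bar>) UNIV / 2"

definition markov_mu :: "'a pmf \<Rightarrow> (nat \<Rightarrow> 'a \<Rightarrow> 'a pmf) \<Rightarrow> 'a list \<Rightarrow> real" where
  "markov_mu p0 p xb =
     pmf p0 (xb ! 0) * (\<Prod>k\<in>{1..<length xb}. pmf (p k (xb ! (k - 1))) (xb ! k))"

definition hmm_rho :: "nat \<Rightarrow> 'a pmf \<Rightarrow> (nat \<Rightarrow> 'a \<Rightarrow> 'a pmf) \<Rightarrow> (nat \<Rightarrow> 'a \<Rightarrow> 'b pmf)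
    \<Rightarrow> 'b list \<Rightarrow> real" where
  "hmm_rho n p0 p q x =
     (if length x = n then
        infsum (\<lambda>xb. markov_mu p0 p xb * (\<Prod>l\<in>{1..n}. pmf (q l (xb ! (l - 1))) (x ! (l - 1))))
          {xb. length xb = n}
      else 0)"

definition cond_event_prob :: "('b list \<Rightarrow> real) \<Rightarrow> nat \<Rightarrow> nat \<Rightarrow> 'b list \<Rightarrow> 'b \<Rightarrow> real" where
  "cond_event_prob rho n i y w =
     infsum rho {x. length x = n \<and> take (i - 1) x = y \<and> x ! (i - 1) = w}"

text \<open>Conditional law L(X_j^n | X_1^{i-1} = y, X_i = w), as a mass function on lists z.\<close>
definition cond_law :: "('b list \<Rightarrow> real) \<Rightarrow> nat \<Rightarrow> nat \<Rightarrow> nat \<Rightarrow> 'b list \<Rightarrow> 'b \<Rightarrow> 'b list \<Rightarrow> real" where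
  "cond_law rho n i j y w z =
     infsum rho {x. length x = n \<and> take (i - 1) x = y \<and> x ! (i - 1) = w \<and> drop (j - 1) x = z}
     / cond_event_prob rho n i y w"

definition eta :: "('b list \<Rightarrow> real) \<Rightarrow> nat \<Rightarrow> nat \<Rightarrow> nat \<Rightarrow> 'b list \<Rightarrow> 'b \<Rightarrow> 'b \<Rightarrow> real" where
  "eta rho n i j y w w' = tv (cond_law rho n i j y w) (cond_law rho n i j y w')"

definition theta :: "(nat \<Rightarrow> 'a \<Rightarrow> 'a pmf) \<Rightarrow> nat \<Rightarrow> real" where
  "theta p k = (SUP xx\<in>(UNIV :: ('a \<times> 'a) set). tv (pmf (p k (fst xx))) (pmf (p k (snd xx))))"

end

(* Conditionally on X_1, ..., X_i, the hidden state at time i has some posterior law, and the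
   tail X_j, ..., X_n arises from it by running the hidden chain through the kernels
   p_i, ..., p_(j-1) and then generating the remaining observations from the state at time j.
   By Dobrushin's inequality, a kernel whose rows are pairwise within total variation c shrinks
   the total variation between any two input laws by the factor c.  Applied to each p_k this
   gives theta_k, and the final observation kernel does not increase total variation.  So the
   two conditional laws of the tail are within theta_i ... theta_(j-1) times the total
   variation of the two posteriors, which is at most 1. *)

theory Submission
  imports Defs
begin

section \<open>Total variation of probability mass functions\<close>

lemma tv_pmf_eq_nn_integral:
  "ennreal (2 * tv (pmf M) (pmf N)) = (\<integral>\<^sup>+x. ennreal \<bar>pmf M x - pmf N x\<bar> \<partial>count_space UNIV)"
proof -
  have "Infinite_Set_Sum.abs_summable_on (\<lambda>x. \<bar>pmf M x - pmf N x\<bar>) UNIV"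
    by (intro abs_summable_on_normI[where f = "\<lambda>x. pmf M x - pmf N x", simplified]
        abs_summable_on_diff pmf_abs_summable)
  then show ?thesis
    by (simp add: tv_def nn_integral_conv_infsetsum infsetsum_infsum)
qed

lemma tv_commute: "tv f g = tv g f"
  by (simp add: tv_def abs_minus_commute)

lemma tv_pmf_nonneg: "0 \<le> tv (pmf M) (pmf N)"
  by (simp add: tv_def infsum_nonneg)

(* The truncation of ennreal at zero makes the integrand the positive part of the difference. *)
lemma tv_pmf_eq_nn_integral_pos:
  "ennreal (tv (pmf M) (pmf N)) = (\<integral>\<^sup>+x. ennreal (pmf M x - pmf N x) \<partial>count_space UNIV)"
proof -
  let ?I = "\<lambda>f. \<integral>\<^sup>+x. ennreal (f x) \<partial>count_space UNIV"
  let ?P = "?I (\<lambda>x. pmf M x - pmf N x)" and ?Q = "?I (\<lambda>x. pmf N x - pmf M x)"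
  have min_add_pos: "ennreal (min a b) + ennreal (a - b) = ennreal a" if "0 \<le> b" for a b :: real
    using that by (cases "a \<le> b") (auto simp: ennreal_neg simp flip: ennreal_plus)
  have pos_add_neg: "ennreal (a - b) + ennreal (b - a) = ennreal \<bar>a - b\<bar>" for a b :: real
    by (cases "a \<le> b") (auto simp: ennreal_neg)
  have split: "?I (\<lambda>x. min (pmf L x) (pmf L' x)) + ?I (\<lambda>x. pmf L x - pmf L' x) = 1" for L L'
  proof -
    have "?I (\<lambda>x. min (pmf L x) (pmf L' x)) + ?I (\<lambda>x. pmf L x - pmf L' x) = ?I (pmf L)"
      by (subst nn_integral_add[symmetric]) (auto intro!: nn_integral_cong min_add_pos)
    also have "\<dots> = 1"
      by (simp add: nn_integral_pmf measure_pmf.emeasure_space_1[simplified])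
    finally show ?thesis .
  qed
  let ?Z = "?I (\<lambda>x. min (pmf M x) (pmf N x))"
  have "?I (\<lambda>x. min (pmf N x) (pmf M x)) = ?Z"
    by (simp add: min.commute)
  moreover have "?Z \<noteq> \<top>"
    using split[of M N] by (auto simp: top_add)
  ultimately have "?P = ?Q"
    using split[of M N] split[of N M]
      ennreal_add_diff_cancel_left[of ?Z ?P] ennreal_add_diff_cancel_left[of ?Z ?Q]
    by simp
  moreover have "?P + ?Q = ennreal (2 * tv (pmf M) (pmf N))"
    unfolding tv_pmf_eq_nn_integral
    by (subst nn_integral_add[symmetric]) (auto intro!: nn_integral_cong pos_add_neg)
  ultimately have "?P + ?P = ennreal (2 * tv (pmf M) (pmf N))"
    by (simp only:)
  then show ?thesis
    using tv_pmf_nonneg[of M N] by (cases ?P) (auto simp flip: ennreal_plus)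
qed

lemma tv_pmf_le_1: "tv (pmf M) (pmf N) \<le> 1"
proof -
  have "ennreal (tv (pmf M) (pmf N)) \<le> (\<integral>\<^sup>+x. ennreal (pmf M x) \<partial>count_space UNIV)"
    unfolding tv_pmf_eq_nn_integral_pos by (intro nn_integral_mono ennreal_leI) simp
  also have "\<dots> = 1"
    by (simp add: nn_integral_pmf measure_pmf.emeasure_space_1[simplified])
  finally show ?thesis
    by simp
qed

lemma tv_le_theta: "tv (pmf (p k u)) (pmf (p k u')) \<le> theta p k"
proof -
  have "bdd_above ((\<lambda>uu. tv (pmf (p k (fst uu))) (pmf (p k (snd uu)))) ` UNIV)"
    by (rule bdd_aboveI2[where M = 1]) (rule tv_pmf_le_1)
  from cSUP_upper[OF UNIV_I this, of "(u, u')"] show ?thesis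
    by (simp add: theta_def)
qed

lemma theta_nonneg: "0 \<le> theta p k"
  using order_trans[OF tv_pmf_nonneg tv_le_theta] .

lemma nn_integral_count_space_swap:
  fixes f :: "'x \<Rightarrow> 'y::countable \<Rightarrow> ennreal"
  shows "(\<integral>\<^sup>+x. \<integral>\<^sup>+y. f x y \<partial>count_space UNIV \<partial>count_space UNIV) =
         (\<integral>\<^sup>+y. \<integral>\<^sup>+x. f x y \<partial>count_space UNIV \<partial>count_space UNIV)"
  by (rule nn_integral_count_space_nn_integral) auto

lemma nn_integral_mult_pmf_le:
  fixes f :: "'u \<Rightarrow> ennreal"
  shows "(\<integral>\<^sup>+u. f u * pmf (K u) v \<partial>count_space UNIV) \<le> (\<integral>\<^sup>+u. f u \<partial>count_space UNIV)"
  by (intro nn_integral_mono mult_left_le) (simp_all add: pmf_le_1)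

lemma nn_integral_kernel_pos_diff:
  fixes f g :: "'u::countable \<Rightarrow> ennreal" and K :: "'u \<Rightarrow> 'v::countable pmf"
  shows "(\<integral>\<^sup>+v. \<integral>\<^sup>+u. \<integral>\<^sup>+u'. f u * g u' * ennreal (pmf (K u) v - pmf (K u') v)
            \<partial>count_space UNIV \<partial>count_space UNIV \<partial>count_space UNIV)
       = (\<integral>\<^sup>+u. \<integral>\<^sup>+u'. f u * g u' * ennreal (tv (pmf (K u)) (pmf (K u')))
            \<partial>count_space UNIV \<partial>count_space UNIV)"
proof -
  let ?I = "\<lambda>h. \<integral>\<^sup>+u. h u \<partial>count_space UNIV"
  have "?I (\<lambda>v. ?I (\<lambda>u. ?I (\<lambda>u'. f u * g u' * ennreal (pmf (K u) v - pmf (K u') v))))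
      = ?I (\<lambda>u. ?I (\<lambda>v. ?I (\<lambda>u'. f u * g u' * ennreal (pmf (K u) v - pmf (K u') v))))"
    by (rule nn_integral_count_space_swap)
  also have "\<dots> = ?I (\<lambda>u. ?I (\<lambda>u'. ?I (\<lambda>v. f u * g u' * ennreal (pmf (K u) v - pmf (K u') v))))"
    by (intro nn_integral_cong nn_integral_count_space_swap)
  also have "\<dots> = ?I (\<lambda>u. ?I (\<lambda>u'. f u * g u' * ennreal (tv (pmf (K u)) (pmf (K u')))))"
    by (simp add: tv_pmf_eq_nn_integral_pos nn_integral_cmult)
  finally show ?thesis .
qed

(* Writing T as the integral of g in the first term and as the integral of f in the second
   turns both into double integrals over (u, u'). *)
lemma mult_nn_integral_mixture_diff_le:
  fixes f g :: "'u::countable \<Rightarrow> ennreal" and K :: "'u \<Rightarrow> 'v pmf"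
  assumes f: "(\<integral>\<^sup>+u. f u \<partial>count_space UNIV) = T" and g: "(\<integral>\<^sup>+u. g u \<partial>count_space UNIV) = T"
    and T: "T \<noteq> \<top>"
  shows "T * ((\<integral>\<^sup>+u. f u * pmf (K u) v \<partial>count_space UNIV)
              - (\<integral>\<^sup>+u. g u * pmf (K u) v \<partial>count_space UNIV))
         \<le> (\<integral>\<^sup>+u. \<integral>\<^sup>+u'. f u * g u' * ennreal (pmf (K u) v - pmf (K u') v)
              \<partial>count_space UNIV \<partial>count_space UNIV)"
proof -
  let ?I = "\<lambda>h. \<integral>\<^sup>+u. h u \<partial>count_space UNIV"
  have le_add_pos: "ennreal a \<le> ennreal b + ennreal (a - b)" if "0 \<le> b" for a b :: real
    using that
    by (cases "a \<le> b") (auto simp: ennreal_neg simp flip: ennreal_plus intro: ennreal_leI)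
  have "T * ?I (\<lambda>u. f u * pmf (K u) v) = ?I (\<lambda>u. ?I (\<lambda>u'. f u * g u' * pmf (K u) v))"
    by (simp add: g nn_integral_cmult nn_integral_multc mult_ac)
  also have "\<dots> \<le> ?I (\<lambda>u. ?I (\<lambda>u'. f u * g u' * pmf (K u') v
                                  + f u * g u' * ennreal (pmf (K u) v - pmf (K u') v)))"
    by (intro nn_integral_mono) (auto simp flip: distrib_left intro!: mult_left_mono le_add_pos)
  also have "\<dots> = ?I (\<lambda>u'. ?I (\<lambda>u. f u * g u' * pmf (K u') v))
      + ?I (\<lambda>u. ?I (\<lambda>u'. f u * g u' * ennreal (pmf (K u) v - pmf (K u') v)))"
    by (simp add: nn_integral_add
        nn_integral_count_space_swap[of "\<lambda>u u'. f u * g u' * pmf (K u') v"])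
  also have "?I (\<lambda>u'. ?I (\<lambda>u. f u * g u' * pmf (K u') v)) = T * ?I (\<lambda>u. g u * pmf (K u) v)"
    by (simp add: f nn_integral_cmult nn_integral_multc mult_ac)
  finally have "T * ?I (\<lambda>u. f u * pmf (K u) v)
      \<le> T * ?I (\<lambda>u. g u * pmf (K u) v)
        + ?I (\<lambda>u. ?I (\<lambda>u'. f u * g u' * ennreal (pmf (K u) v - pmf (K u') v)))" .
  moreover have "T * ?I (\<lambda>u. g u * pmf (K u) v) \<noteq> \<top>"
    using T nn_integral_mult_pmf_le[of g K v] by (auto simp: g ennreal_mult_eq_top_iff top_unique)
  ultimately show ?thesis
    using T by (simp add: ennreal_right_diff_distrib ennreal_minus_le_iff)
qed

lemma nn_integral_mixture_diff_le:
  fixes f g :: "'u::countable \<Rightarrow> ennreal" and K :: "'u \<Rightarrow> 'v::countable pmf"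
  assumes f: "(\<integral>\<^sup>+u. f u \<partial>count_space UNIV) = T" and g: "(\<integral>\<^sup>+u. g u \<partial>count_space UNIV) = T"
    and T: "T \<noteq> \<top>"
    and K: "\<And>u u'. tv (pmf (K u)) (pmf (K u')) \<le> c"
  shows "T * (\<integral>\<^sup>+v. (\<integral>\<^sup>+u. f u * pmf (K u) v \<partial>count_space UNIV)
                    - (\<integral>\<^sup>+u. g u * pmf (K u) v \<partial>count_space UNIV) \<partial>count_space UNIV)
         \<le> T * T * ennreal c"
proof -
  let ?I = "\<lambda>h. \<integral>\<^sup>+u. h u \<partial>count_space UNIV"
  have "T * ?I (\<lambda>v. ?I (\<lambda>u. f u * pmf (K u) v) - ?I (\<lambda>u. g u * pmf (K u) v))
      \<le> ?I (\<lambda>v. ?I (\<lambda>u. ?I (\<lambda>u'. f u * g u' * ennreal (pmf (K u) v - pmf (K u') v))))"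
    by (subst nn_integral_cmult[symmetric])
      (auto intro!: nn_integral_mono mult_nn_integral_mixture_diff_le[OF f g T])
  also have "\<dots> = ?I (\<lambda>u. ?I (\<lambda>u'. f u * g u' * ennreal (tv (pmf (K u)) (pmf (K u')))))"
    by (rule nn_integral_kernel_pos_diff)
  also have "\<dots> \<le> ?I (\<lambda>u. ?I (\<lambda>u'. f u * g u' * ennreal c))"
    by (intro nn_integral_mono mult_left_mono ennreal_leI K) auto
  also have "\<dots> = T * T * ennreal c"
    by (simp add: nn_integral_cmult nn_integral_multc f g)
  finally show ?thesis .
qed

(* M and N share the mass min (M u) (N u), which cancels in the difference. *)
lemma ennreal_pmf_bind_diff:
  "ennreal (pmf (bind_pmf M K) v - pmf (bind_pmf N K) v) =
     (\<integral>\<^sup>+u. ennreal (pmf M u - pmf N u) * pmf (K u) v \<partial>count_space UNIV)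
     - (\<integral>\<^sup>+u. ennreal (pmf N u - pmf M u) * pmf (K u) v \<partial>count_space UNIV)"
proof -
  let ?I = "\<lambda>h. \<integral>\<^sup>+u. h u \<partial>count_space UNIV"
  let ?H = "?I (\<lambda>u. ennreal (min (pmf M u) (pmf N u)) * pmf (K u) v)"
  have split: "ennreal (pmf (bind_pmf L K) v) =
      ?H + ?I (\<lambda>u. ennreal (pmf L u - pmf L' u) * pmf (K u) v)"
    if "L = M \<and> L' = N \<or> L = N \<and> L' = M" for L L'
  proof -
    have "ennreal (pmf L u) =
        ennreal (min (pmf M u) (pmf N u)) + ennreal (pmf L u - pmf L' u)" for u
      using that by (cases "pmf L u \<le> pmf L' u") (auto simp: ennreal_neg simp flip: ennreal_plus)
    then show ?thesis
      by (simp add: ennreal_pmf_bind nn_integral_measure_pmf distrib_right nn_integral_add)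
  qed
  have "?H \<noteq> \<top>"
    using split[of M N] by (auto simp: top_add)
  moreover have "ennreal (pmf (bind_pmf M K) v - pmf (bind_pmf N K) v)
      = ennreal (pmf (bind_pmf M K) v) - ennreal (pmf (bind_pmf N K) v)"
    by (simp add: ennreal_minus)
  ultimately show ?thesis
    using split[of M N] split[of N M] by (simp add: diff_add_eq_diff_diff_swap_ennreal)
qed

lemma tv_bind_pmf_le:
  fixes M N :: "'u::countable pmf" and K :: "'u \<Rightarrow> 'v::countable pmf"
  assumes K: "\<And>u u'. tv (pmf (K u)) (pmf (K u')) \<le> c"
  shows "tv (pmf (bind_pmf M K)) (pmf (bind_pmf N K)) \<le> c * tv (pmf M) (pmf N)"
proof -
  let ?I = "\<lambda>h. \<integral>\<^sup>+u. h u \<partial>count_space UNIV"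
  define t where "t = tv (pmf M) (pmf N)"
  define f where "f u = ennreal (pmf M u - pmf N u)" for u
  define g where "g u = ennreal (pmf N u - pmf M u)" for u
  let ?tv' = "tv (pmf (bind_pmf M K)) (pmf (bind_pmf N K))"
  have t: "0 \<le> t" and c: "0 \<le> c"
    using tv_pmf_nonneg order_trans[OF tv_pmf_nonneg K] by (auto simp: t_def)
  have f: "?I f = ennreal t"
    by (simp add: f_def t_def tv_pmf_eq_nn_integral_pos)
  have g: "?I g = ennreal t"
    using tv_pmf_eq_nn_integral_pos[of N M] by (simp add: g_def t_def tv_commute)
  have tv_bind: "ennreal ?tv' = ?I (\<lambda>v. ?I (\<lambda>u. f u * pmf (K u) v) - ?I (\<lambda>u. g u * pmf (K u) v))"
    by (simp add: tv_pmf_eq_nn_integral_pos ennreal_pmf_bind_diff f_def g_def)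
  show ?thesis
  proof (cases "t = 0")
    case True
    have "?I (\<lambda>u. f u * pmf (K u) v) = 0" for v
      using nn_integral_mult_pmf_le[of f K v] by (simp add: f True)
    then have "ennreal ?tv' = 0"
      unfolding tv_bind by simp
    then show ?thesis
      using True tv_pmf_nonneg[of "bind_pmf M K" "bind_pmf N K"] by (simp add: t_def)
  next
    case False
    have "ennreal (t * ?tv') = ennreal t * ennreal ?tv'"
      using t tv_pmf_nonneg by (rule ennreal_mult)
    also have "\<dots> \<le> ennreal t * ennreal t * ennreal c"
      unfolding tv_bind by (rule nn_integral_mixture_diff_le[OF f g _ K]) simp
    also have "\<dots> = ennreal (t * (c * t))"
      using t c by (simp add: ennreal_mult mult_ac)
    finally have "t * ?tv' \<le> t * (c * t)"
      using t c by (simp add: ennreal_le_iff)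
    then show ?thesis
      using t False by (simp add: t_def)
  qed
qed

lemma pmf_bind_pmf_map_pmf_inj:
  assumes inj: "\<And>v t v' t'. g v t = g v' t' \<Longrightarrow> v = v' \<and> t = t'"
  shows "pmf (bind_pmf M (\<lambda>v. map_pmf (g v) (G v))) (g v t) = pmf M v * pmf (G v) t"
proof -
  have pointwise: "pmf (map_pmf (g x) (G x)) (g v t) = (if x = v then pmf (G v) t else 0)" for x
  proof (cases "x = v")
    case True
    have "inj (g x)"
      using inj by (auto simp: inj_def)
    then show ?thesis
      using True by (simp add: pmf_map_inj')
  next
    case False
    then have "g v t \<notin> g x ` set_pmf (G x)"
      using inj by blast
    then show ?thesis
      using False by (simp add: pmf_map_outside)
  qed
  have "ennreal (pmf (bind_pmf M (\<lambda>v. map_pmf (g v) (G v))) (g v t))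
      = (\<integral>\<^sup>+x. ennreal (pmf M x) * ennreal (if x = v then pmf (G v) t else 0) \<partial>count_space UNIV)"
    by (simp add: ennreal_pmf_bind nn_integral_measure_pmf pointwise)
  also have "\<dots> = (\<integral>\<^sup>+x. ennreal (pmf M v * pmf (G v) t) * indicator {v} x \<partial>count_space UNIV)"
    by (intro nn_integral_cong) (auto simp: ennreal_mult' split: split_indicator)
  also have "\<dots> = ennreal (pmf M v * pmf (G v) t)"
    by (simp add: nn_integral_cmult_indicator)
  finally show ?thesis
    by (simp add: ennreal_inj)
qed

lemma pmf_bind_pmf_map_pmf_outside:
  assumes "\<And>v t. z \<noteq> g v t"
  shows "pmf (bind_pmf M (\<lambda>v. map_pmf (g v) (G v))) z = 0"
proof -
  have "pmf (map_pmf (g v) (G v)) z = 0" for v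
    using assms by (intro pmf_map_outside) auto
  then show ?thesis
    by (simp add: pmf_bind)
qed

lemma infsum_pmf_eq_pmf_map_pmf:
  assumes "A \<inter> set_pmf M = g -` {v} \<inter> set_pmf M"
  shows "infsum (pmf M) A = pmf (map_pmf g M) v"
proof -
  have "infsum (pmf M) A = measure_pmf.prob M A"
    by (simp add: measure_pmf_conv_infsetsum infsetsum_infsum pmf_abs_summable)
  also have "\<dots> = measure_pmf.prob M (A \<inter> set_pmf M)"
    by (simp add: measure_Int_set_pmf)
  also have "\<dots> = pmf (map_pmf g M) v"
    by (simp add: assms measure_Int_set_pmf pmf_map)
  finally show ?thesis .
qed

lemma map_pmf_fst_bind_Pair:
  "map_pmf fst (bind_pmf P (\<lambda>(x, c). map_pmf (Pair c) (F x))) = map_pmf snd P"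
  by (simp add: map_bind_pmf map_pmf_comp split_beta map_pmf_def[of snd])

lemma pmf_bind_Pair_div_eq_pmf_bind_cond_pmf:
  fixes P :: "('x \<times> 'c) pmf" and F :: "'x \<Rightarrow> 'z pmf"
  assumes pos: "pmf (map_pmf snd P) s \<noteq> 0"
  shows "pmf (bind_pmf P (\<lambda>(x, c). map_pmf (Pair c) (F x))) (s, z) / pmf (map_pmf snd P) s =
         pmf (bind_pmf (map_pmf fst (cond_pmf P {xc. snd xc = s})) F) z"
proof -
  let ?S = "{xc. snd xc = s}" and ?G = "\<lambda>(x, c). F x"
  have "s \<in> snd ` set_pmf P"
    using pos set_pmf_iff[of s "map_pmf snd P"] by simp
  then have ne: "set_pmf P \<inter> ?S \<noteq> {}"
    by auto
  have den: "emeasure (measure_pmf P) ?S = ennreal (pmf (map_pmf snd P) s)"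
    by (simp add: pmf_map measure_pmf.emeasure_eq_measure vimage_def)
  have pointwise: "pmf (map_pmf (Pair c) (F x)) (s, z) = indicator ?S (x, c) * pmf (F x) z" for x c
    by (cases "c = s") (auto simp: pmf_map_inj' inj_on_def intro!: pmf_map_outside)
  have "ennreal (pmf (bind_pmf (cond_pmf P ?S) ?G) z)
      = (\<integral>\<^sup>+xc. ennreal (pmf (?G xc) z) * indicator ?S xc \<partial>measure_pmf P)
        / emeasure (measure_pmf P) ?S"
    by (simp add: ennreal_pmf_bind cond_pmf.rep_eq[OF ne] nn_integral_uniform_measure)
  also have "(\<integral>\<^sup>+xc. ennreal (pmf (?G xc) z) * indicator ?S xc \<partial>measure_pmf P)
      = ennreal (pmf (bind_pmf P (\<lambda>(x, c). map_pmf (Pair c) (F x))) (s, z))"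
    by (auto simp: ennreal_pmf_bind pointwise mult.commute split: split_indicator
        intro!: nn_integral_cong)
  finally show ?thesis
    using pos by (simp add: den divide_ennreal ennreal_inj bind_map_pmf split_beta)
qed

section \<open>The hidden Markov model\<close>

(* The hidden states at times k + 1, ..., k + m of the chain started in state u at time k. *)
primrec hidden_path :: "(nat \<Rightarrow> 'a \<Rightarrow> 'a pmf) \<Rightarrow> nat \<Rightarrow> 'a \<Rightarrow> nat \<Rightarrow> 'a list pmf" where
  "hidden_path p k u 0 = return_pmf []"
| "hidden_path p k u (Suc m) = bind_pmf (p k u) (\<lambda>v. map_pmf (Cons v) (hidden_path p (Suc k) v m))"

primrec emissions :: "(nat \<Rightarrow> 'a \<Rightarrow> 'b pmf) \<Rightarrow> nat \<Rightarrow> 'a list \<Rightarrow> 'b list pmf" where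
  "emissions q l [] = return_pmf []"
| "emissions q l (u # us) = bind_pmf (q l u) (\<lambda>c. map_pmf (Cons c) (emissions q (Suc l) us))"

lemma pmf_hidden_path:
  "pmf (hidden_path p k u m) r =
     (if length r = m then \<Prod>t<m. pmf (p (k + t) ((u # r) ! t)) (r ! t) else 0)"
proof (induction m arbitrary: k u r)
  case 0
  then show ?case
    by (cases r) auto
next
  case (Suc m)
  show ?case
  proof (cases r)
    case Nil
    then show ?thesis
      by (auto intro!: pmf_bind_pmf_map_pmf_outside)
  next
    case (Cons v r')
    have "pmf (hidden_path p k u (Suc m)) (v # r') =
        pmf (p k u) v * pmf (hidden_path p (Suc k) v m) r'"
      unfolding hidden_path.simps by (rule pmf_bind_pmf_map_pmf_inj) simp
    then show ?thesis
      using Cons by (simp add: Suc.IH prod.lessThan_Suc_shift del: prod.lessThan_Suc)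
  qed
qed

lemma pmf_emissions:
  "pmf (emissions q l xs) cs =
     (if length cs = length xs then \<Prod>t<length xs. pmf (q (l + t) (xs ! t)) (cs ! t) else 0)"
proof (induction xs arbitrary: l cs)
  case Nil
  then show ?case
    by (cases cs) auto
next
  case (Cons u xs)
  show ?case
  proof (cases cs)
    case Nil
    then show ?thesis
      by (auto intro!: pmf_bind_pmf_map_pmf_outside)
  next
    case (Cons c cs')
    have "pmf (emissions q l (u # xs)) (c # cs') = pmf (q l u) c * pmf (emissions q (Suc l) xs) cs'"
      unfolding emissions.simps by (rule pmf_bind_pmf_map_pmf_inj) simp
    then show ?thesis
      using Cons by (simp add: Cons.IH prod.lessThan_Suc_shift del: prod.lessThan_Suc)
  qed
qed

definition markov_pmf :: "nat \<Rightarrow> 'a pmf \<Rightarrow> (nat \<Rightarrow> 'a \<Rightarrow> 'a pmf) \<Rightarrow> 'a list pmf" where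
  "markov_pmf n p0 p = bind_pmf p0 (\<lambda>u. map_pmf (Cons u) (hidden_path p 1 u (n - 1)))"

definition hmm_pmf ::
    "nat \<Rightarrow> 'a pmf \<Rightarrow> (nat \<Rightarrow> 'a \<Rightarrow> 'a pmf) \<Rightarrow> (nat \<Rightarrow> 'a \<Rightarrow> 'b pmf) \<Rightarrow> 'b list pmf" where
  "hmm_pmf n p0 p q = bind_pmf (markov_pmf n p0 p) (emissions q 1)"

lemma pmf_markov_pmf:
  assumes "1 \<le> n"
  shows "pmf (markov_pmf n p0 p) xb = (if length xb = n then markov_mu p0 p xb else 0)"
proof (cases xb)
  case Nil
  then show ?thesis
    using assms by (auto simp: markov_pmf_def intro!: pmf_bind_pmf_map_pmf_outside)
next
  case (Cons u r)
  have "pmf (markov_pmf n p0 p) (u # r) = pmf p0 u * pmf (hidden_path p 1 u (n - 1)) r"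
    unfolding markov_pmf_def by (rule pmf_bind_pmf_map_pmf_inj) simp
  moreover have "markov_mu p0 p (u # r) = pmf p0 u * pmf (hidden_path p 1 u (length r)) r"
    by (simp add: markov_mu_def pmf_hidden_path prod.atLeast_Suc_lessThan_Suc_shift atLeast0LessThan
        del: prod.op_ivl_Suc)
  ultimately show ?thesis
    using Cons assms by (auto simp: pmf_hidden_path)
qed

lemma hmm_rho_eq_pmf_hmm_pmf:
  fixes p0 :: "'a::countable pmf" and q :: "nat \<Rightarrow> 'a \<Rightarrow> 'b pmf"
  assumes n: "1 \<le> n"
  shows "hmm_rho n p0 p q = pmf (hmm_pmf n p0 p q)"
proof
  fix x :: "'b list"
  let ?w = "\<lambda>xb. pmf (markov_pmf n p0 p) xb * pmf (emissions q 1 xb) x"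
  have "Infinite_Set_Sum.abs_summable_on ?w UNIV"
    by (rule abs_summable_on_comparison_test[OF pmf_abs_summable[of "markov_pmf n p0 p"]])
      (simp add: mult_right_le_one_le pmf_le_1)
  then have "pmf (hmm_pmf n p0 p q) x = infsum ?w UNIV"
    by (simp add: hmm_pmf_def pmf_bind pmf_expectation_eq_infsetsum infsetsum_infsum)
  also have "\<dots> = infsum ?w {xb. length xb = n}"
    using n by (intro infsum_cong_neutral) (auto simp: pmf_markov_pmf)
  also have "\<dots> = hmm_rho n p0 p q x"
    using n by (auto simp: hmm_rho_def pmf_markov_pmf pmf_emissions prod.atLeast1_atMost_eq
        intro!: infsum_cong infsum_0)
  finally show "hmm_rho n p0 p q x = pmf (hmm_pmf n p0 p q) x" ..
qed

lemma length_of_set_pmf_hidden_path: "r \<in> set_pmf (hidden_path p k u m) \<Longrightarrow> length r = m"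
  by (induction m arbitrary: k u r) auto

lemma length_of_set_pmf_emissions: "cs \<in> set_pmf (emissions q l xs) \<Longrightarrow> length cs = length xs"
  by (induction xs arbitrary: l cs) auto

lemma length_of_set_pmf_markov_pmf:
  "l \<in> set_pmf (markov_pmf m p0 p) \<Longrightarrow> 1 \<le> m \<Longrightarrow> length l = m"
  by (auto simp: markov_pmf_def dest!: length_of_set_pmf_hidden_path)

lemma length_of_set_pmf_hmm_pmf: "x \<in> set_pmf (hmm_pmf n p0 p q) \<Longrightarrow> 1 \<le> n \<Longrightarrow> length x = n"
  by (auto simp: hmm_pmf_def dest!: length_of_set_pmf_emissions length_of_set_pmf_markov_pmf)

section \<open>The Markov property at a fixed time\<close>

lemma hidden_path_add:
  "hidden_path p k u (m1 + m2) =
     bind_pmf (hidden_path p k u m1)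
       (\<lambda>r. map_pmf (\<lambda>r'. r @ r') (hidden_path p (k + m1) (last (u # r)) m2))"
proof (induction m1 arbitrary: k u)
  case 0
  then show ?case
    by (simp add: bind_return_pmf map_pmf_idI)
next
  case (Suc m1)
  then show ?case
    by (simp add: bind_assoc_pmf bind_map_pmf map_bind_pmf map_pmf_comp)
      (auto intro!: bind_pmf_cong map_pmf_cong)
qed

lemma markov_pmf_add:
  "markov_pmf (Suc m1 + m2) p0 p =
     bind_pmf (markov_pmf (Suc m1) p0 p)
       (\<lambda>l. map_pmf (\<lambda>r. l @ r) (hidden_path p (Suc m1) (last l) m2))"
  by (simp add: markov_pmf_def hidden_path_add bind_assoc_pmf bind_map_pmf map_bind_pmf
      map_pmf_comp)
    (auto intro!: bind_pmf_cong map_pmf_cong)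

lemma emissions_append:
  "emissions q l (xs @ ys) =
     bind_pmf (emissions q l xs) (\<lambda>cs. map_pmf (\<lambda>cs'. cs @ cs') (emissions q (l + length xs) ys))"
proof (induction xs arbitrary: l)
  case Nil
  then show ?case
    by (simp add: bind_return_pmf map_pmf_idI)
next
  case (Cons u xs)
  then show ?case
    by (simp add: bind_assoc_pmf bind_map_pmf map_bind_pmf map_pmf_comp)
      (auto intro!: bind_pmf_cong map_pmf_cong)
qed

lemma map_pmf_drop_emissions:
  "map_pmf (drop d) (emissions q l xs) = emissions q (l + d) (drop d xs)"
proof (induction xs arbitrary: l d)
  case Nil
  then show ?case
    by simp
next
  case (Cons u xs)
  then show ?case
    by (cases d) (simp_all add: map_bind_pmf map_pmf_comp)
qed

definition hidden_state :: "(nat \<Rightarrow> 'a \<Rightarrow> 'a pmf) \<Rightarrow> nat \<Rightarrow> nat \<Rightarrow> 'a \<Rightarrow> 'a pmf" where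
  "hidden_state p k m u = map_pmf (\<lambda>r. last (u # r)) (hidden_path p k u m)"

(* The observations at times k, ..., k + m, given the hidden state u at time k. *)
definition observations ::
    "(nat \<Rightarrow> 'a \<Rightarrow> 'a pmf) \<Rightarrow> (nat \<Rightarrow> 'a \<Rightarrow> 'b pmf) \<Rightarrow> nat \<Rightarrow> nat \<Rightarrow> 'a \<Rightarrow> 'b list pmf" where
  "observations p q k m u = bind_pmf (hidden_path p k u m) (\<lambda>r. emissions q k (u # r))"

lemma hidden_state_0: "hidden_state p k 0 = return_pmf"
  by (simp add: hidden_state_def fun_eq_iff)

lemma hidden_state_Suc: "hidden_state p k (Suc m) u = bind_pmf (p k u) (hidden_state p (Suc k) m)"
  unfolding hidden_state_def[abs_def] by (simp add: map_bind_pmf map_pmf_comp)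

lemma drop_length_minus_1: "xs \<noteq> [] \<Longrightarrow> drop (length xs - 1) xs = [last xs]"
  by (induction xs) (auto simp: drop_Cons')

lemma bind_hidden_path_drop_emissions:
  assumes "d < m"
  shows "bind_pmf (hidden_path p k u m) (\<lambda>r. map_pmf (drop d) (emissions q (Suc k) r))
       = bind_pmf (hidden_state p k (Suc d) u) (observations p q (k + Suc d) (m - Suc d))"
proof -
  have split: "hidden_path p k u m = bind_pmf (hidden_path p k u (Suc d))
      (\<lambda>r1. map_pmf (\<lambda>r2. r1 @ r2) (hidden_path p (k + Suc d) (last (u # r1)) (m - Suc d)))"
    using assms by (subst (1) hidden_path_add[symmetric]) simp
  have suffix: "emissions q (Suc k + d) (drop d (r1 @ r2)) =
      emissions q (k + Suc d) (last (u # r1) # r2)"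
    if "r1 \<in> set_pmf (hidden_path p k u (Suc d))" for r1 r2
  proof -
    have "length r1 = Suc d"
      using that by (rule length_of_set_pmf_hidden_path)
    then show ?thesis
      using drop_length_minus_1[of r1] by auto
  qed
  have "bind_pmf (hidden_path p k u m) (\<lambda>r. map_pmf (drop d) (emissions q (Suc k) r))
      = bind_pmf (hidden_path p k u (Suc d)) (\<lambda>r1.
          bind_pmf (hidden_path p (k + Suc d) (last (u # r1)) (m - Suc d))
          (\<lambda>r2. emissions q (Suc k + d) (drop d (r1 @ r2))))"
    by (simp only: split bind_assoc_pmf bind_map_pmf map_pmf_drop_emissions)
  also have "\<dots> = bind_pmf (hidden_path p k u (Suc d)) (\<lambda>r1.
          bind_pmf (hidden_path p (k + Suc d) (last (u # r1)) (m - Suc d))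
          (\<lambda>r2. emissions q (k + Suc d) (last (u # r1) # r2)))"
    by (intro bind_pmf_cong refl suffix)
  also have "\<dots> = bind_pmf (hidden_state p k (Suc d) u) (observations p q (k + Suc d) (m - Suc d))"
    by (simp add: hidden_state_def observations_def bind_map_pmf)
  finally show ?thesis .
qed

(* The joint law of the hidden state at time m and the observations at times 1, ..., m. *)
definition prefix_pmf ::
    "nat \<Rightarrow> 'a pmf \<Rightarrow> (nat \<Rightarrow> 'a \<Rightarrow> 'a pmf) \<Rightarrow> (nat \<Rightarrow> 'a \<Rightarrow> 'b pmf) \<Rightarrow> ('a \<times> 'b list) pmf" where
  "prefix_pmf m p0 p q =
     bind_pmf (markov_pmf m p0 p) (\<lambda>l. map_pmf (Pair (last l)) (emissions q 1 l))"

(* Given the hidden state at time a + 1, the observations from time b + 1 on are independent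
   of the first a + 1 observations (list indices are 0-based, times 1-based). *)
lemma map_pmf_take_drop_hmm_pmf:
  assumes ab: "a < b" "b < n"
  shows "map_pmf (\<lambda>x. (take (Suc a) x, drop b x)) (hmm_pmf n p0 p q) =
    bind_pmf (prefix_pmf (Suc a) p0 p q) (\<lambda>(u, c). map_pmf (Pair c)
      (bind_pmf (hidden_state p (Suc a) (b - a) u) (observations p q (Suc b) (n - Suc b))))"
proof -
  let ?f = "\<lambda>x. (take (Suc a) x, drop b x)"
  let ?d = "b - Suc a" and ?m = "n - Suc a"
  let ?tail = "\<lambda>u. bind_pmf (hidden_state p (Suc a) (b - a) u)
      (observations p q (Suc b) (n - Suc b))"
  have markov: "markov_pmf n p0 p =
      bind_pmf (markov_pmf (Suc a) p0 p)
        (\<lambda>l. map_pmf (\<lambda>r. l @ r) (hidden_path p (Suc a) (last l) ?m))"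
    using markov_pmf_add[of a ?m p0 p] ab by simp
  have emit: "map_pmf ?f (emissions q 1 (l @ r)) =
      bind_pmf (emissions q 1 l)
        (\<lambda>c. map_pmf (Pair c) (map_pmf (drop ?d) (emissions q (Suc (Suc a)) r)))"
    if "length l = Suc a" for l r
  proof -
    have "?f (c @ c') = (c, drop ?d c')" if "c \<in> set_pmf (emissions q 1 l)" for c c'
      using length_of_set_pmf_emissions[OF that] \<open>length l = Suc a\<close> ab by simp
    then show ?thesis
      using that
      by (auto simp: emissions_append map_bind_pmf map_pmf_comp intro!: bind_pmf_cong map_pmf_cong)
  qed
  have tail: "map_pmf (drop ?d) (bind_pmf (hidden_path p (Suc a) u ?m) (emissions q (Suc (Suc a))))
      = ?tail u" for u
    using bind_hidden_path_drop_emissions[of ?d ?m p "Suc a" u q] ab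
    by (simp add: Suc_diff_Suc map_bind_pmf)
  have "map_pmf ?f (hmm_pmf n p0 p q) = bind_pmf (markov_pmf (Suc a) p0 p) (\<lambda>l.
      bind_pmf (hidden_path p (Suc a) (last l) ?m) (\<lambda>r. map_pmf ?f (emissions q 1 (l @ r))))"
    by (simp add: hmm_pmf_def markov bind_assoc_pmf bind_map_pmf map_bind_pmf)
  also have "\<dots> = bind_pmf (markov_pmf (Suc a) p0 p) (\<lambda>l.
      bind_pmf (hidden_path p (Suc a) (last l) ?m) (\<lambda>r. bind_pmf (emissions q 1 l) (\<lambda>c.
        map_pmf (Pair c) (map_pmf (drop ?d) (emissions q (Suc (Suc a)) r)))))"
    by (intro bind_pmf_cong refl emit) (simp add: length_of_set_pmf_markov_pmf)
  also have "\<dots> = bind_pmf (markov_pmf (Suc a) p0 p) (\<lambda>l.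
      bind_pmf (emissions q 1 l) (\<lambda>c. map_pmf (Pair c) (?tail (last l))))"
    by (subst bind_commute_pmf) (simp add: map_bind_pmf[symmetric] tail)
  also have "\<dots> = bind_pmf (prefix_pmf (Suc a) p0 p q) (\<lambda>(u, c). map_pmf (Pair c) (?tail u))"
    by (simp add: prefix_pmf_def bind_assoc_pmf bind_map_pmf)
  finally show ?thesis .
qed

lemma take_Suc_eq_snoc_iff:
  "length y = a \<Longrightarrow> a < length x \<Longrightarrow> take (Suc a) x = y @ [w] \<longleftrightarrow> take a x = y \<and> x ! a = w"
  by (auto simp: take_Suc_conv_app_nth)

lemma infsum_hmm_rho_prefix:
  fixes p0 :: "'a::countable pmf"
  assumes "1 \<le> i" "i \<le> n" "length y = i - 1"
  shows "infsum (hmm_rho n p0 p q) {x. length x = n \<and> take (i - 1) x = y \<and> x ! (i - 1) = w} =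
    pmf (map_pmf (take i) (hmm_pmf n p0 p q)) (y @ [w])"
proof -
  have "{x. length x = n \<and> take (i - 1) x = y \<and> x ! (i - 1) = w} \<inter> set_pmf (hmm_pmf n p0 p q) =
      take i -` {y @ [w]} \<inter> set_pmf (hmm_pmf n p0 p q)"
    using assms take_Suc_eq_snoc_iff[of y "i - 1"]
    by (auto dest: length_of_set_pmf_hmm_pmf)
  then show ?thesis
    using assms by (simp add: hmm_rho_eq_pmf_hmm_pmf infsum_pmf_eq_pmf_map_pmf)
qed

lemma infsum_hmm_rho_prefix_suffix:
  fixes p0 :: "'a::countable pmf"
  assumes "1 \<le> i" "i \<le> n" "length y = i - 1"
  shows "infsum (hmm_rho n p0 p q)
      {x. length x = n \<and> take (i - 1) x = y \<and> x ! (i - 1) = w \<and> drop (j - 1) x = z} =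
    pmf (map_pmf (\<lambda>x. (take i x, drop (j - 1) x)) (hmm_pmf n p0 p q)) (y @ [w], z)"
proof -
  have "{x. length x = n \<and> take (i - 1) x = y \<and> x ! (i - 1) = w \<and> drop (j - 1) x = z}
        \<inter> set_pmf (hmm_pmf n p0 p q) =
      (\<lambda>x. (take i x, drop (j - 1) x)) -` {(y @ [w], z)} \<inter> set_pmf (hmm_pmf n p0 p q)"
    using assms take_Suc_eq_snoc_iff[of y "i - 1"]
    by (auto dest: length_of_set_pmf_hmm_pmf)
  then show ?thesis
    using assms by (simp add: hmm_rho_eq_pmf_hmm_pmf infsum_pmf_eq_pmf_map_pmf)
qed

definition hidden_posterior ::
    "nat \<Rightarrow> 'a pmf \<Rightarrow> (nat \<Rightarrow> 'a \<Rightarrow> 'a pmf) \<Rightarrow> (nat \<Rightarrow> 'a \<Rightarrow> 'b pmf) \<Rightarrow> 'b list \<Rightarrow> 'a pmf" where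
  "hidden_posterior m p0 p q s = map_pmf fst (cond_pmf (prefix_pmf m p0 p q) {uc. snd uc = s})"

lemma cond_law_hmm_rho:
  fixes p0 :: "'a::countable pmf" and q :: "nat \<Rightarrow> 'a \<Rightarrow> 'b::countable pmf"
  assumes ij: "1 \<le> i" "i < j" "j \<le> n" and y: "length y = i - 1"
    and pos: "cond_event_prob (hmm_rho n p0 p q) n i y w > 0"
  shows "cond_law (hmm_rho n p0 p q) n i j y w =
    pmf (bind_pmf (hidden_posterior i p0 p q (y @ [w]))
      (\<lambda>u. bind_pmf (hidden_state p i (j - i) u) (observations p q j (n - j))))"
proof
  fix z
  let ?P = "prefix_pmf i p0 p q" and ?s = "y @ [w]"
  let ?tail = "\<lambda>u. bind_pmf (hidden_state p i (j - i) u) (observations p q j (n - j))"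
  have i: "i \<le> n"
    using ij by simp
  have split: "map_pmf (\<lambda>x. (take i x, drop (j - 1) x)) (hmm_pmf n p0 p q) =
      bind_pmf ?P (\<lambda>(u, c). map_pmf (Pair c) (?tail u))"
    using map_pmf_take_drop_hmm_pmf[of "i - 1" "j - 1" n p0 p q] ij by simp
  have "map_pmf (take i) (hmm_pmf n p0 p q) = map_pmf snd ?P"
    using arg_cong[OF split, of "map_pmf fst"] by (simp add: map_pmf_comp map_pmf_fst_bind_Pair)
  then have den: "cond_event_prob (hmm_rho n p0 p q) n i y w = pmf (map_pmf snd ?P) ?s"
    unfolding cond_event_prob_def infsum_hmm_rho_prefix[OF ij(1) i y] by simp
  have "cond_law (hmm_rho n p0 p q) n i j y w z =
      pmf (bind_pmf ?P (\<lambda>(u, c). map_pmf (Pair c) (?tail u))) (?s, z) / pmf (map_pmf snd ?P) ?s"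
    unfolding cond_law_def den[symmetric] infsum_hmm_rho_prefix_suffix[OF ij(1) i y] split ..
  also have "\<dots> = pmf (bind_pmf (hidden_posterior i p0 p q ?s) ?tail) z"
    using pos den unfolding hidden_posterior_def
    by (intro pmf_bind_Pair_div_eq_pmf_bind_cond_pmf) simp
  finally show "cond_law (hmm_rho n p0 p q) n i j y w z =
      pmf (bind_pmf (hidden_posterior i p0 p q ?s) ?tail) z" .
qed

section \<open>Contraction of the conditional laws\<close>

lemma tv_bind_hidden_state_le:
  fixes M N :: "'a::countable pmf"
  shows "tv (pmf (bind_pmf M (hidden_state p k m))) (pmf (bind_pmf N (hidden_state p k m)))
     \<le> (\<Prod>t\<in>{k..<k + m}. theta p t) * tv (pmf M) (pmf N)"
proof (induction m arbitrary: k M N)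
  case 0
  then show ?case
    by (simp add: hidden_state_0 bind_return_pmf')
next
  case (Suc m)
  have shift: "bind_pmf L (hidden_state p k (Suc m)) =
      bind_pmf (bind_pmf L (p k)) (hidden_state p (Suc k) m)"
    for L :: "'a pmf"
    by (simp add: hidden_state_Suc[abs_def] bind_assoc_pmf)
  have "tv (pmf (bind_pmf M (hidden_state p k (Suc m))))
        (pmf (bind_pmf N (hidden_state p k (Suc m))))
      \<le> (\<Prod>t\<in>{Suc k..<Suc k + m}. theta p t) * tv (pmf (bind_pmf M (p k))) (pmf (bind_pmf N (p k)))"
    unfolding shift by (rule Suc.IH)
  also have "\<dots> \<le> (\<Prod>t\<in>{Suc k..<Suc k + m}. theta p t) * (theta p k * tv (pmf M) (pmf N))"
    by (intro mult_left_mono tv_bind_pmf_le tv_le_theta prod_nonneg theta_nonneg)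
  also have "\<dots> = (\<Prod>t\<in>{k..<k + Suc m}. theta p t) * tv (pmf M) (pmf N)"
    by (simp add: prod.atLeast_Suc_lessThan)
  finally show ?case .
qed

theorem theorem1:
  fixes p0 :: "'a::countable pmf"
    and p :: "nat \<Rightarrow> 'a \<Rightarrow> 'a pmf"
    and q :: "nat \<Rightarrow> 'a \<Rightarrow> 'b::countable pmf"
    and n i j :: nat
    and y :: "'b list" and w w' :: 'b
  assumes "n \<ge> 2" and "1 \<le> i" and "i < j" and "j \<le> n"
    and "length y = i - 1"
    and "cond_event_prob (hmm_rho n p0 p q) n i y w > 0"
    and "cond_event_prob (hmm_rho n p0 p q) n i y w' > 0"
  shows "eta (hmm_rho n p0 p q) n i j y w w' \<le> (\<Prod>k\<in>{i..<j}. theta p k)"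
proof -
  let ?post = "\<lambda>v. hidden_posterior i p0 p q (y @ [v])"
  let ?chain = "hidden_state p i (j - i)" and ?obs = "observations p q j (n - j)"
  have "eta (hmm_rho n p0 p q) n i j y w w'
      = tv (pmf (bind_pmf (bind_pmf (?post w) ?chain) ?obs))
           (pmf (bind_pmf (bind_pmf (?post w') ?chain) ?obs))"
    using assms by (simp add: eta_def cond_law_hmm_rho bind_assoc_pmf)
  also have "\<dots> \<le> 1 * tv (pmf (bind_pmf (?post w) ?chain)) (pmf (bind_pmf (?post w') ?chain))"
    by (intro tv_bind_pmf_le tv_pmf_le_1)
  also have "\<dots> \<le> (\<Prod>k\<in>{i..<j}. theta p k) * tv (pmf (?post w)) (pmf (?post w'))"
    using tv_bind_hidden_state_le[of "?post w" p i "j - i" "?post w'"] assms by simp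
  also have "\<dots> \<le> (\<Prod>k\<in>{i..<j}. theta p k)"
    by (intro mult_right_le_one_le tv_pmf_le_1 tv_pmf_nonneg prod_nonneg theta_nonneg)
  finally show ?thesis .
qed

end
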